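(* Let $h(x)=\frac{1}{e^x-1}$. For every integer $k\ge1$ and $\varepsilon>0$, $$D_{2,k}^\varepsilon:=\int_\varepsilon^\infty\frac{x^kh^{(k)}(x)}{e^x-1}dx=\sum_{j=1}^{k+1}(-1)^{j+1}K_{k+1,j}\,Z_\varepsilon(k,j).$$
   Context: For integers $0\le j\le m$, $K_{m,j}=\frac1m\binom mjB_{m-j}+\delta_{j,m-1}$, where $B_n$ are Bernoulli numbers ($\frac{t}{e^t-1}=\sum_nB_n\frac{t^n}{n!}$) and $\delta$ is the Kronecker delta. For $\varepsilon>0$ and integers $k,j\ge0$, $Z_\varepsilon(k,j)=\sum_{q=1}^\infty q^j\int_\varepsilon^\infty e^{-qy}y^kdy$. *)

theory Defs
  imports "HOL-Analysis.Analysis" "HOL-Computational_Algebra.Formal_Power_Series"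
begin

text \<open>Bernoulli numbers via the exponential generating function t/(e^t-1) (so B_1 = -1/2).\<close>
definition bernoulli_num :: "nat \<Rightarrow> real" where
  "bernoulli_num n = fact n * fps_nth (fps_X / (fps_exp 1 - 1)) n"

definition K_coef :: "nat \<Rightarrow> nat \<Rightarrow> real" where
  "K_coef m j = (1 / real m) * real (m choose j) * bernoulli_num (m - j)
               + (if j = m - 1 then 1 else 0)"

definition Z_eps :: "real \<Rightarrow> nat \<Rightarrow> nat \<Rightarrow> real" where
  "Z_eps \<epsilon> k j = (\<Sum>q. real (Suc q) ^ j *
       integral {\<epsilon>..} (\<lambda>y. exp (- real (Suc q) * y) * y ^ k))"

definition h_fun :: "real \<Rightarrow> real" where
  "h_fun x = 1 / (exp x - 1)"

end

theory Submission
  imports Defs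
begin

text \<open>With z = exp(-x) the function h is the geometric series sum_{n>=1} z^n, so
  h^(k)(x) = sum_{n>=1} (-n)^k exp(-nx), and the Cauchy product with h gives
  h^(k)(x) h(x) = sum_n A_n exp(-nx) with A_n = sum_{i<n} (-i)^k. All A_n have the sign (-1)^k,
  so monotone convergence justifies integrating x^k exp(-nx) termwise over [eps, oo).
  Faulhaber's formula, read off from the generating function t/(e^t - 1), writes A_n as the
  polynomial sum_j (-1)^(j+1) K_{k+1,j} n^j; exchanging the finite sum over j with the sum
  over n produces the Z_eps(k,j).\<close>

lemma fps_bernoulli_times_exp_minus_one:
  "fps_X / (fps_exp (1::real) - 1) * (fps_exp 1 - 1) = fps_X"
proof -
  have sd: "subdegree (fps_exp (1::real) - 1) = 1"
    by (rule subdegreeI) (auto simp: less_Suc_eq)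
  then have "fps_exp (1::real) - 1 \<noteq> 0" by auto
  with sd show ?thesis by (intro fps_times_divide_eq) simp_all
qed

lemma sum_fps_exp_neg_times_exp_minus_one:
  "(\<Sum>q=1..n. fps_exp (- real q)) * (fps_exp 1 - 1) = 1 - fps_exp (- real n)"
proof (induction n)
  case 0 then show ?case by simp
next
  case (Suc n)
  have "fps_exp 1 * fps_exp (- 1 - real n) = fps_exp (- real n)"
    by (simp flip: fps_exp_add_mult)
  with Suc show ?case by (simp add: algebra_simps)
qed

lemma sum_neg_powers_eq_bernoulli:
  "(\<Sum>q=1..n. (- real q) ^ k) = (\<Sum>j=1..k+1. (-1)^(j+1) *
      ((1 / real (k+1)) * real ((k+1) choose j) * bernoulli_num (k + 1 - j)) * real n ^ j)"
proof -
  define G where "G = fps_X / (fps_exp (1::real) - 1)"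
  define T where "T = (\<Sum>q=1..n. fps_exp (- real q))"
  define E where "E = (1::real fps) - fps_exp (- real n)"
  have "T * fps_X = T * (G * (fps_exp 1 - 1))"
    by (simp add: G_def fps_bernoulli_times_exp_minus_one)
  also have "\<dots> = G * E"
    by (simp add: T_def E_def sum_fps_exp_neg_times_exp_minus_one[symmetric] algebra_simps)
  finally have "fps_nth (T * fps_X) (k+1) = fps_nth (G * E) (k+1)" by simp
  moreover have "fps_nth (T * fps_X) (k+1) = (\<Sum>q=1..n. (- real q) ^ k) / fact k"
    by (simp add: T_def fps_sum_nth sum_divide_distrib)
  moreover have "fps_nth (G * E) (k+1) = (\<Sum>i=0..k. fps_nth G i * fps_nth E (k+1-i))"
    by (simp add: fps_mult_nth E_def)
  moreover have "\<dots> = (\<Sum>j=1..k+1. fps_nth G (k+1-j) * (- ((- real n) ^ j) / fact j))"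
    by (rule sum.reindex_bij_witness[of _ "\<lambda>j. k+1-j" "\<lambda>i. k+1-i"]) (auto simp: E_def)
  ultimately have "(\<Sum>q=1..n. (- real q) ^ k)
      = (\<Sum>j=1..k+1. fact k * (fps_nth G (k+1-j) * (- ((- real n) ^ j) / fact j)))"
    by (simp add: field_simps sum_distrib_left)
  also have "\<dots> = (\<Sum>j=1..k+1. (-1)^(j+1) *
      ((1 / real (k+1)) * real ((k+1) choose j) * bernoulli_num (k + 1 - j)) * real n ^ j)"
  proof (intro sum.cong refl)
    fix j assume "j \<in> {1..k+1}"
    then have "real ((k+1) choose j) = fact (k+1) / (fact j * fact (k+1-j))"
      by (simp add: binomial_fact)
    moreover have "fact (k+1) = real (k+1) * fact k" by simp
    ultimately show "fact k * (fps_nth G (k+1-j) * (- ((- real n) ^ j) / fact j)) = (-1)^(j+1) *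
        ((1 / real (k+1)) * real ((k+1) choose j) * bernoulli_num (k + 1 - j)) * real n ^ j"
      unfolding bernoulli_num_def G_def[symmetric]
      by (simp add: power_minus' field_simps del: of_nat_Suc fact_Suc)
  qed
  finally show ?thesis .
qed

text \<open>The Kronecker delta in K_{k+1,k} removes the top term (-n)^k; this needs k >= 1.\<close>

lemma sum_neg_powers_eq_K_coef:
  assumes "k \<ge> 1"
  shows "(\<Sum>j=1..k+1. (-1)^(j+1) * K_coef (k+1) j * real n ^ j) = (\<Sum>i<n. (- real i) ^ k)"
proof -
  have "(\<Sum>j=1..k+1. (-1)^(j+1) * K_coef (k+1) j * real n ^ j)
     = (\<Sum>j=1..k+1. (-1)^(j+1) *
         ((1 / real (k+1)) * real ((k+1) choose j) * bernoulli_num (k + 1 - j)) * real n ^ j)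
       + (\<Sum>j=1..k+1. (if j = k then (-1)^(k+1) * real n ^ k else 0))"
    unfolding sum.distrib[symmetric] K_coef_def
    by (intro sum.cong refl) (auto simp: algebra_simps)
  also have "(\<Sum>j=1..k+1. (if j = k then (-1)^(k+1) * real n ^ k else 0)) = (-1)^(k+1) * real n ^ k"
    using assms by (simp add: sum.delta)
  also note sum_neg_powers_eq_bernoulli[symmetric]
  also have "(\<Sum>q=1..n. (- real q) ^ k) = (\<Sum>i<n. (- real i) ^ k) + (- real n) ^ k"
    using assms by (induction n) (simp_all add: sum.atLeast1_atMost_eq)
  finally show ?thesis by (simp add: power_minus')
qed

lemma summable_of_nat_power_mult_power:
  fixes z :: "'a::{real_normed_field,banach}"
  assumes "norm z < 1"
  shows "summable (\<lambda>n. of_nat n ^ j * z ^ n)"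
  using assms
proof (induction j arbitrary: z)
  case 0 then show ?case by simp
next
  case (Suc j)
  have "summable (\<lambda>n. diffs (\<lambda>n. of_nat n ^ j) n * z ^ n)"
    by (rule termdiff_converges[where K=1]) (use Suc in auto)
  then have "summable (\<lambda>n. z * (diffs (\<lambda>n. of_nat n ^ j) n * z ^ n))"
    by (rule summable_mult)
  then have "summable (\<lambda>n. of_nat (Suc n) ^ Suc j * z ^ Suc n)"
    by (simp add: diffs_def algebra_simps)
  then show ?case by (subst summable_Suc_iff[symmetric])
qed

text \<open>hder_series k (exp (-x)) is h^(k)(x) = sum_{n>=1} (-n)^k exp(-nx); the coefficient at
  n = 0 is set to 0 explicitly because (-0)^0 = 1.\<close>

definition hder_coeff :: "nat \<Rightarrow> nat \<Rightarrow> real" where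
  "hder_coeff k n = (if n = 0 then 0 else (- real n) ^ k)"

definition hder_series :: "nat \<Rightarrow> real \<Rightarrow> real" where
  "hder_series k z = (\<Sum>n. hder_coeff k n * z ^ n)"

lemma summable_norm_hder_coeff:
  assumes "\<bar>z\<bar> < 1"
  shows "summable (\<lambda>n. norm (hder_coeff k n * z ^ n))"
proof (rule summable_comparison_test')
  show "summable (\<lambda>n. real n ^ k * \<bar>z\<bar> ^ n)"
    using summable_of_nat_power_mult_power[of "\<bar>z\<bar>" k] assms by simp
  show "norm (norm (hder_coeff k n * z ^ n)) \<le> real n ^ k * \<bar>z\<bar> ^ n" for n
    by (simp add: hder_coeff_def abs_mult power_abs)
qed

lemma summable_hder_coeff: "\<bar>z\<bar> < 1 \<Longrightarrow> summable (\<lambda>n. hder_coeff k n * z ^ n)"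
  by (rule summable_norm_cancel[OF summable_norm_hder_coeff])

lemma diffs_hder_coeff: "diffs (hder_coeff k) n = - hder_coeff (Suc k) (Suc n)"
  by (simp add: diffs_def hder_coeff_def algebra_simps)

lemma hder_series_Suc:
  assumes "\<bar>z\<bar> < 1"
  shows "hder_series (Suc k) z = - z * (\<Sum>n. diffs (hder_coeff k) n * z ^ n)"
proof -
  have "hder_series (Suc k) z = (\<Sum>n. hder_coeff (Suc k) (Suc n) * z ^ Suc n)"
    unfolding hder_series_def using suminf_split_head[OF summable_hder_coeff[OF assms, of "Suc k"]]
    by (simp add: hder_coeff_def)
  also have "\<dots> = (\<Sum>n. - z * (diffs (hder_coeff k) n * z ^ n))"
    by (simp add: diffs_hder_coeff mult_ac)
  also have "\<dots> = - z * (\<Sum>n. diffs (hder_coeff k) n * z ^ n)"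
    by (rule suminf_mult) (rule termdiff_converges[where K=1], use assms summable_hder_coeff in auto)
  finally show ?thesis .
qed

lemma has_real_derivative_hder_series_exp:
  assumes "x > 0"
  shows "((\<lambda>x. hder_series k (exp (- x))) has_real_derivative hder_series (Suc k) (exp (- x))) (at x)"
proof -
  have z: "\<bar>exp (- x)\<bar> < 1" using assms by simp
  have "(hder_series k has_field_derivative (\<Sum>n. diffs (hder_coeff k) n * exp (- x) ^ n)) (at (exp (- x)))"
    unfolding hder_series_def[abs_def]
    by (rule termdiffs_strong'[where K=1]) (use z summable_hder_coeff in auto)
  then have "((\<lambda>x. hder_series k (exp (- x))) has_real_derivative
      (\<Sum>n. diffs (hder_coeff k) n * exp (- x) ^ n) * (- exp (- x))) (at x)"
    by (rule DERIV_chain2) (auto intro!: derivative_eq_intros)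
  then show ?thesis by (simp add: hder_series_Suc[OF z] mult.commute)
qed

lemma h_fun_eq_hder_series: "x > 0 \<Longrightarrow> h_fun x = hder_series 0 (exp (- x))"
proof -
  assume x: "x > 0"
  define z where "z = exp (- x)"
  have z: "\<bar>z\<bar> < 1" "z > 0" using x by (auto simp: z_def)
  have "hder_series 0 z = (\<Sum>n. z * z ^ n)"
    unfolding hder_series_def using suminf_split_head[OF summable_hder_coeff[OF z(1), of 0]]
    by (simp add: hder_coeff_def)
  also have "\<dots> = z / (1 - z)"
    using suminf_mult[OF summable_geometric[of z]] suminf_geometric[of z] z by simp
  also have "\<dots> = h_fun x"
    using x unfolding h_fun_def z_def by (simp add: exp_minus field_simps)
  finally show ?thesis by (simp add: z_def)
qed

lemma deriv_iter_h_fun: "x > 0 \<Longrightarrow> (deriv ^^ k) h_fun x = hder_series k (exp (- x))"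
proof (induction k arbitrary: x)
  case 0 then show ?case by (simp add: h_fun_eq_hder_series)
next
  case (Suc k)
  have "eventually (\<lambda>y. (deriv ^^ k) h_fun y = hder_series k (exp (- y))) (nhds x)"
    using eventually_nhds_in_open[of "{0<..}" x] Suc.prems
    by (auto elim!: eventually_mono intro: Suc.IH)
  then have "(deriv ^^ Suc k) h_fun x = deriv (\<lambda>y. hder_series k (exp (- y))) x"
    by (simp add: deriv_cong_ev[OF _ refl])
  also have "\<dots> = hder_series (Suc k) (exp (- x))"
    by (rule DERIV_imp_deriv[OF has_real_derivative_hder_series_exp[OF Suc.prems]])
  finally show ?case .
qed

lemma hder_series_mult_sums:
  assumes "\<bar>z\<bar> < 1"
  shows "(\<lambda>n. (\<Sum>i<n. hder_coeff k i) * z ^ n) sums (hder_series k z * hder_series 0 z)"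
proof -
  have "(\<Sum>i\<le>n. (hder_coeff k i * z ^ i) * (hder_coeff 0 (n - i) * z ^ (n - i)))
      = (\<Sum>i<n. hder_coeff k i) * z ^ n" for n
  proof -
    have "(\<Sum>i\<le>n. (hder_coeff k i * z ^ i) * (hder_coeff 0 (n - i) * z ^ (n - i)))
        = (\<Sum>i<n. hder_coeff k i * (z ^ i * z ^ (n - i)))"
      by (simp add: lessThan_Suc_atMost[symmetric] hder_coeff_def mult.assoc)
    also have "\<dots> = (\<Sum>i<n. hder_coeff k i * z ^ n)"
      by (intro sum.cong refl) (simp flip: power_add)
    finally show ?thesis by (simp add: sum_distrib_right)
  qed
  then show ?thesis
    using Cauchy_product_sums[OF summable_norm_hder_coeff[OF assms, of k]
        summable_norm_hder_coeff[OF assms, of 0]]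
    unfolding hder_series_def by simp
qed

lemma power_mult_deriv_iter_h_fun_sums:
  assumes "k \<ge> 1" and "x > 0"
  shows "(\<lambda>n. (\<Sum>i<n. (- real i) ^ k) * (exp (- real n * x) * x ^ k))
           sums (x ^ k * (deriv ^^ k) h_fun x / (exp x - 1))"
proof -
  define z where "z = exp (- x)"
  have z: "\<bar>z\<bar> < 1" using assms by (simp add: z_def)
  have "hder_coeff k i = (- real i) ^ k" for i
    using assms by (simp add: hder_coeff_def)
  then have "(\<lambda>n. ((\<Sum>i<n. (- real i) ^ k) * z ^ n) * x ^ k)
      sums (hder_series k z * hder_series 0 z * x ^ k)"
    using sums_mult2[OF hder_series_mult_sums[OF z, of k], of "x ^ k"] by simp
  moreover have "exp (- real n * x) = z ^ n" for n
    unfolding z_def by (simp flip: exp_of_nat_mult)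
  moreover have "x ^ k * (deriv ^^ k) h_fun x / (exp x - 1) = hder_series k z * hder_series 0 z * x ^ k"
  proof -
    have "hder_series 0 z = 1 / (exp x - 1)" "(deriv ^^ k) h_fun x = hder_series k z"
      using h_fun_eq_hder_series[OF assms(2)] deriv_iter_h_fun[OF assms(2)]
      by (simp_all add: h_fun_def z_def)
    then show ?thesis by simp
  qed
  ultimately show ?thesis by (simp add: mult.assoc)
qed

lemma power_div_fact_le_exp: "(t::real) \<ge> 0 \<Longrightarrow> t ^ k / fact k \<le> exp t"
proof -
  assume t: "t \<ge> 0"
  have "sum (\<lambda>n. t ^ n /\<^sub>R fact n) {k} \<le> (\<Sum>n. t ^ n /\<^sub>R fact n)"
    by (rule sum_le_suminf[OF sums_summable[OF exp_converges]]) (use t in auto)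
  then show ?thesis
    using sums_unique[OF exp_converges[of t]] by (simp add: divide_inverse mult.commute)
qed

lemma integrable_exp_mult_power:
  fixes r c :: real
  assumes "r > 0" and "c \<ge> 0"
  shows "(\<lambda>y. exp (- r * y) * y ^ k) integrable_on {c..}"
proof (rule measurable_bounded_by_integrable_imp_integrable)
  show "(\<lambda>y. exp (- r * y) * y ^ k) \<in> borel_measurable (lebesgue_on {c..})"
    by (intro continuous_imp_measurable_on_sets_lebesgue continuous_intros) auto
  show "(\<lambda>y. fact k * (2 / r) ^ k * exp (- (r / 2) * y)) integrable_on {c..}"
    using assms by (intro integrable_on_mult_right integrable_on_exp_minus_to_infinity) auto
  fix y assume "y \<in> {c..}"
  then have y: "y \<ge> 0" using assms by auto
  have "(r * y / 2) ^ k / fact k \<le> exp (r * y / 2)"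
    using assms y by (intro power_div_fact_le_exp) simp
  then have "(r * y / 2) ^ k \<le> fact k * exp (r * y / 2)"
    by (simp add: pos_divide_le_eq mult.commute)
  then have "(2 / r) ^ k * (r * y / 2) ^ k \<le> (2 / r) ^ k * (fact k * exp (r * y / 2))"
    using assms by (intro mult_left_mono) simp_all
  moreover have "(2 / r) ^ k * (r * y / 2) ^ k = y ^ k"
    using assms by (simp flip: power_mult_distrib)
  ultimately have "y ^ k \<le> fact k * (2 / r) ^ k * exp (r * y / 2)"
    by (simp add: mult_ac)
  then have "exp (- r * y) * y ^ k \<le> exp (- r * y) * (fact k * (2 / r) ^ k * exp (r * y / 2))"
    by (rule mult_left_mono) simp
  also have "\<dots> = fact k * (2 / r) ^ k * exp (- (r / 2) * y)"
    by (simp add: mult_ac flip: exp_add)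
  finally show "norm (exp (- r * y) * y ^ k) \<le> fact k * (2 / r) ^ k * exp (- (r / 2) * y)"
    using y by simp
qed auto

definition exp_moment_tail :: "real \<Rightarrow> nat \<Rightarrow> real \<Rightarrow> real" where
  "exp_moment_tail \<epsilon> k r = integral {\<epsilon>..} (\<lambda>y. exp (- r * y) * y ^ k)"

lemma exp_moment_tail_nonneg:
  "r > 0 \<Longrightarrow> \<epsilon> \<ge> 0 \<Longrightarrow> 0 \<le> exp_moment_tail \<epsilon> k r"
  unfolding exp_moment_tail_def
  by (rule integral_nonneg[OF integrable_exp_mult_power]) auto

lemma exp_moment_tail_shift_le:
  assumes "\<epsilon> \<ge> 0" and "r > 0" and "s \<ge> 0"
  shows "exp_moment_tail \<epsilon> k (r + s) \<le> exp (- s * \<epsilon>) * exp_moment_tail \<epsilon> k r"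
proof -
  have "integral {\<epsilon>..} (\<lambda>y. exp (- (r + s) * y) * y ^ k)
      \<le> integral {\<epsilon>..} (\<lambda>y. exp (- s * \<epsilon>) * (exp (- r * y) * y ^ k))"
  proof (rule integral_le)
    show "(\<lambda>y. exp (- (r + s) * y) * y ^ k) integrable_on {\<epsilon>..}"
      by (rule integrable_exp_mult_power) (use assms in auto)
    show "(\<lambda>y. exp (- s * \<epsilon>) * (exp (- r * y) * y ^ k)) integrable_on {\<epsilon>..}"
      by (rule integrable_on_mult_right, rule integrable_exp_mult_power) (use assms in auto)
    fix y assume y: "y \<in> {\<epsilon>..}"
    have "exp (- (r + s) * y) = exp (- s * y) * exp (- r * y)"
      by (simp add: algebra_simps flip: exp_add)
    moreover have "exp (- s * y) \<le> exp (- s * \<epsilon>)"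
      using y assms by (simp add: mult_left_mono)
    ultimately show "exp (- (r + s) * y) * y ^ k \<le> exp (- s * \<epsilon>) * (exp (- r * y) * y ^ k)"
      using y assms by (simp add: mult_right_mono)
  qed
  then show ?thesis by (simp add: exp_moment_tail_def)
qed

lemma summable_power_mult_exp_moment_tail:
  assumes "\<epsilon> > 0"
  shows "summable (\<lambda>q. real (Suc q) ^ j * exp_moment_tail \<epsilon> k (real (Suc q)))"
proof (rule summable_comparison_test')
  define w where "w = exp (- \<epsilon>)"
  have w: "\<bar>w\<bar> < 1" using assms by (simp add: w_def)
  have "summable (\<lambda>n. real n ^ j * w ^ n)"
    using summable_of_nat_power_mult_power[of w j] w by simp
  then have "summable (\<lambda>n. real (Suc n) ^ j * w ^ Suc n)"
    using summable_Suc_iff[of "\<lambda>n. real n ^ j * w ^ n"] by blast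
  then show "summable (\<lambda>n. exp \<epsilon> * exp_moment_tail \<epsilon> k 1 * (real (Suc n) ^ j * w ^ Suc n))"
    by (rule summable_mult)
  fix n
  have "exp_moment_tail \<epsilon> k (1 + real n) \<le> exp (- real n * \<epsilon>) * exp_moment_tail \<epsilon> k 1"
    using assms by (intro exp_moment_tail_shift_le) auto
  moreover have "exp (- real n * \<epsilon>) = exp \<epsilon> * w ^ Suc n"
    unfolding w_def by (simp flip: exp_of_nat_mult exp_add add: algebra_simps)
  moreover have "0 \<le> exp_moment_tail \<epsilon> k (real (Suc n))"
    using assms by (intro exp_moment_tail_nonneg) auto
  ultimately show "norm (real (Suc n) ^ j * exp_moment_tail \<epsilon> k (real (Suc n)))
      \<le> exp \<epsilon> * exp_moment_tail \<epsilon> k 1 * (real (Suc n) ^ j * w ^ Suc n)"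
    by (simp add: mult_left_mono mult_ac)
qed

lemma sums_K_coef_Z_eps:
  assumes "k \<ge> 1" and "\<epsilon> > 0"
  shows "(\<lambda>n. (\<Sum>i<n. (- real i) ^ k) * exp_moment_tail \<epsilon> k (real n))
           sums (\<Sum>j=1..k+1. (-1) ^ (j + 1) * K_coef (k + 1) j * Z_eps \<epsilon> k j)"
proof -
  have "(\<lambda>q. real (Suc q) ^ j * exp_moment_tail \<epsilon> k (real (Suc q))) sums Z_eps \<epsilon> k j" for j
    using summable_power_mult_exp_moment_tail[OF assms(2)]
    unfolding Z_eps_def exp_moment_tail_def by (simp add: summable_sums)
  then have "(\<lambda>q. \<Sum>j=1..k+1. (-1) ^ (j + 1) * K_coef (k + 1) j *
        (real (Suc q) ^ j * exp_moment_tail \<epsilon> k (real (Suc q))))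
      sums (\<Sum>j=1..k+1. (-1) ^ (j + 1) * K_coef (k + 1) j * Z_eps \<epsilon> k j)"
    by (intro sums_sum sums_mult)
  moreover have "(\<Sum>i<Suc q. (- real i) ^ k) * exp_moment_tail \<epsilon> k (real (Suc q))
      = (\<Sum>j=1..k+1. (-1) ^ (j + 1) * K_coef (k + 1) j *
          (real (Suc q) ^ j * exp_moment_tail \<epsilon> k (real (Suc q))))" for q
    by (simp only: sum_neg_powers_eq_K_coef[OF assms(1), symmetric] sum_distrib_right mult.assoc)
  ultimately have "(\<lambda>q. (\<Sum>i<Suc q. (- real i) ^ k) * exp_moment_tail \<epsilon> k (real (Suc q)))
      sums (\<Sum>j=1..k+1. (-1) ^ (j + 1) * K_coef (k + 1) j * Z_eps \<epsilon> k j)"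
    by simp
  then show ?thesis
    using sums_Suc_iff[of "\<lambda>n. (\<Sum>i<n. (- real i) ^ k) * exp_moment_tail \<epsilon> k (real n)"] by simp
qed

lemma has_integral_suminf_nonneg:
  fixes f :: "nat \<Rightarrow> 'a::euclidean_space \<Rightarrow> real"
  assumes int: "\<And>n. f n integrable_on S"
    and nonneg: "\<And>n x. x \<in> S \<Longrightarrow> 0 \<le> f n x"
    and sums: "\<And>x. x \<in> S \<Longrightarrow> (\<lambda>n. f n x) sums g x"
    and summable: "summable (\<lambda>n. integral S (f n))"
  shows "(g has_integral (\<Sum>n. integral S (f n))) S"
proof -
  define F where "F N x = (\<Sum>n<N. f n x)" for N x
  have integral_F: "integral S (F N) = (\<Sum>n<N. integral S (f n))" for N
    unfolding F_def by (rule integral_sum) (auto intro: int)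
  have integral_f_nonneg: "0 \<le> integral S (f n)" for n
    using int nonneg by (rule integral_nonneg)
  have "g integrable_on S \<and> (\<lambda>N. integral S (F N)) \<longlonglongrightarrow> integral S g"
  proof (rule monotone_convergence_increasing)
    show "F N integrable_on S" for N
      unfolding F_def by (rule integrable_sum) (auto intro: int)
    show "F N x \<le> F (Suc N) x" if "x \<in> S" for N x
      using nonneg[OF that] by (simp add: F_def)
    show "(\<lambda>N. F N x) \<longlonglongrightarrow> g x" if "x \<in> S" for x
      unfolding F_def using sums[OF that] by (simp add: sums_def)
    have "norm (integral S (F N)) \<le> (\<Sum>n. integral S (f n))" for N
      unfolding integral_F using integral_f_nonneg
      by (simp add: sum_nonneg sum_le_suminf[OF summable])
    then show "bounded (range (\<lambda>N. integral S (F N)))"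
      by (intro boundedI) auto
  qed
  moreover have "(\<lambda>N. integral S (F N)) \<longlonglongrightarrow> (\<Sum>n. integral S (f n))"
    unfolding integral_F using summable by (simp add: summable_LIMSEQ)
  ultimately show ?thesis
    using LIMSEQ_unique has_integral_integral by metis
qed

lemma has_integral_power_mult_deriv_iter_h_fun:
  assumes "k \<ge> 1" and "\<epsilon> > 0"
    and L: "(\<lambda>n. (\<Sum>i<n. (- real i) ^ k) * exp_moment_tail \<epsilon> k (real n)) sums L"
  shows "((\<lambda>x. x ^ k * (deriv ^^ k) h_fun x / (exp x - 1)) has_integral L) {\<epsilon>..}"
proof -
  define s :: real where "s = (-1) ^ k"
  have s: "s * s = 1" by (simp add: s_def flip: power_mult_distrib)
  define P where "P n = (\<Sum>i<n. real i ^ k)" for n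
  have neg_P: "(\<Sum>i<n. (- real i) ^ k) = s * P n" for n
    unfolding P_def s_def sum_distrib_left by (intro sum.cong refl power_minus)
  define f where "f n x = P n * (exp (- real n * x) * x ^ k)" for n x
  have int_f: "integral {\<epsilon>..} (f n) = P n * exp_moment_tail \<epsilon> k (real n)" for n
    by (simp add: f_def[abs_def] exp_moment_tail_def)
  have "((\<lambda>x. s * (x ^ k * (deriv ^^ k) h_fun x / (exp x - 1)))
      has_integral (\<Sum>n. integral {\<epsilon>..} (f n))) {\<epsilon>..}"
  proof (rule has_integral_suminf_nonneg)
    show "f n integrable_on {\<epsilon>..}" for n
    proof (cases n)
      case 0
      then show ?thesis by (simp add: f_def[abs_def] P_def integrable_0)
    next
      case (Suc m)
      then show ?thesis unfolding f_def[abs_def]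
        by (intro integrable_on_mult_right integrable_exp_mult_power) (use assms(2) in auto)
    qed
    show "0 \<le> f n x" if "x \<in> {\<epsilon>..}" for n x
      using that assms(2) by (simp add: f_def P_def sum_nonneg)
    show "(\<lambda>n. f n x) sums (s * (x ^ k * (deriv ^^ k) h_fun x / (exp x - 1)))" if "x \<in> {\<epsilon>..}" for x
      using sums_mult[OF power_mult_deriv_iter_h_fun_sums[OF assms(1)], of x s] that assms(2)
      by (simp add: neg_P f_def mult.assoc[symmetric] s)
    show "summable (\<lambda>n. integral {\<epsilon>..} (f n))"
      using sums_summable[OF sums_mult[OF L, of s]]
      by (simp add: int_f neg_P mult.assoc[symmetric] s)
  qed
  moreover have "(\<Sum>n. integral {\<epsilon>..} (f n)) = s * L"
    using sums_unique[OF sums_mult[OF L, of s]]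
    by (simp add: int_f neg_P mult.assoc[symmetric] s)
  ultimately have "((\<lambda>x. s * (x ^ k * (deriv ^^ k) h_fun x / (exp x - 1))) has_integral s * L) {\<epsilon>..}"
    by simp
  moreover have "s \<noteq> 0" by (simp add: s_def)
  ultimately show ?thesis
    using has_integral_mult_right_iff[of s "\<lambda>x. x ^ k * (deriv ^^ k) h_fun x / (exp x - 1)"] by simp
qed

theorem mainTheorem18:
  fixes k :: nat and \<epsilon> :: real
  assumes "k \<ge> 1" and "\<epsilon> > 0"
  shows "integral {\<epsilon>..} (\<lambda>x. x ^ k * (deriv ^^ k) h_fun x / (exp x - 1))
       = (\<Sum>j=1..k+1. (-1) ^ (j + 1) * K_coef (k + 1) j * Z_eps \<epsilon> k j)"
  using has_integral_power_mult_deriv_iter_h_fun[OF assms sums_K_coef_Z_eps[OF assms]] by (rule integral_unique)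

end
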